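(* Let $Z_1,\dots,Z_n$ (primary sample) and $Z_{n+1},\dots,Z_N$ (auxiliary block) be independent, with $\widehat\eta=\{\widehat\pi_a,\widehat\mu_a\}_a$ fitted on the auxiliary block only. For each $r\in\{1,\dots,n\}$ let $Z_r'$ be an independent copy of $Z_r$, let $Z_i^{(r)}=Z_i$ for $i\ne r$ and $Z_r^{(r)}=Z_r'$, and let $\mathbb{P}_n^{(r)}f=\frac1n\sum_{i=1}^nf(Z_i^{(r)})$. Define $\widehat R_n(C;\widehat\eta)=\mathbb{P}_n\varphi_C(\cdot;\widehat\eta)$ and $\widehat R_n^{(r)}(C;\widehat\eta)=\mathbb{P}_n^{(r)}\varphi_C(\cdot;\widehat\eta)$. Suppose $\|\mu_a\|_\infty,\|\widehat\mu_a\|_\infty\le B<\infty$ a.s. for all $a$, and $\mathbb{P}\{\epsilon\le\widehat\pi_a(X)\le1-\epsilon\}=1$ for some $\epsilon>0$. Then $$\sup_{C\in\mathcal{C}_k}\big|\widehat R_n(C;\widehat\eta)-\widehat R_n^{(r)}(C;\widehat\eta)\big|=O_{\mathbb{P}}(n^{-1}),$$ uniformly in $r\in\{1,\dots,n\}$.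
   Context: Each $Z_i=(Y_i,A_i,X_i)$ is an i.i.d. copy of $Z=(Y,A,X)\sim\mathbb{P}$, $A\in\mathcal{A}=\{1,\dots,p\}$; $\mathbb{P}_n$ is the empirical measure of the primary sample. $\mu_a(X)=\mathbb{E}(Y\mid X,A=a)$, $\pi_a(X)=\mathbb{P}(A=a\mid X)$, $\mu=(\mu_1,\dots,\mu_p)^\top$. $\varphi_{1,a}(Z;\eta)=\frac{\mathbb{1}(A=a)}{\pi_a(X)}\{Y-\mu_A(X)\}+\mu_a(X)$, $\varphi_{2,a}(Z;\eta)=2\mu_a(X)\frac{\mathbb{1}(A=a)}{\pi_a(X)}\{Y-\mu_A(X)\}+\mu_a^2(X)$, $\varphi_C(Z;\eta)=\sum_a\{\varphi_{2,a}(Z;\eta)-2\varphi_{1,a}(Z;\eta)[\Pi_C(\mu)]_a+[\Pi_C(\mu)]_a^2\}$, evaluated at $\widehat\eta$ by replacing $\mu,\pi$ with $\widehat\mu,\widehat\pi$. Codebooks $C=\{c_1,\dots,c_k\}\subset\mathbb{R}^p$; $\mathcal{C}_k$ those of size $k$ in the image of $\mu$; $\Pi_C(x)=\arg\min_{c\in C}\|c-x\|_2^2$. *)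

theory Defs
  imports "HOL-Probability.Probability"
begin

text \<open>Observations z = (Y, A, X) :: real \<times> nat \<times> 'x. Points of R^p are functions
  nat \<Rightarrow> real, only the coordinates 1..p being relevant.\<close>

definition obsY :: "real \<times> nat \<times> 'x \<Rightarrow> real" where "obsY z = fst z"
definition obsA :: "real \<times> nat \<times> 'x \<Rightarrow> nat" where "obsA z = fst (snd z)"
definition obsX :: "real \<times> nat \<times> 'x \<Rightarrow> 'x" where "obsX z = snd (snd z)"

definition proj_cb :: "nat \<Rightarrow> (nat \<Rightarrow> real) set \<Rightarrow> (nat \<Rightarrow> real) \<Rightarrow> (nat \<Rightarrow> real)" where
  "proj_cb p C v = arg_min_on (\<lambda>c. \<Sum>a=1..p. (c a - v a)^2) C"

definition vec_of :: "nat \<Rightarrow> (nat \<Rightarrow> 'x \<Rightarrow> real) \<Rightarrow> 'x \<Rightarrow> (nat \<Rightarrow> real)" where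
  "vec_of p m x = (\<lambda>a. if a \<in> {1..p} then m a x else 0)"

definition codebooks :: "nat \<Rightarrow> nat \<Rightarrow> (nat \<Rightarrow> 'x \<Rightarrow> real) \<Rightarrow> 'x set \<Rightarrow> (nat \<Rightarrow> real) set set" where
  "codebooks p k m Xs = {C. finite C \<and> card C = k \<and> C \<subseteq> vec_of p m ` Xs}"

definition phi1 :: "(nat \<Rightarrow> 'x \<Rightarrow> real) \<Rightarrow> (nat \<Rightarrow> 'x \<Rightarrow> real) \<Rightarrow> nat \<Rightarrow> real \<times> nat \<times> 'x \<Rightarrow> real" where
  "phi1 mh ph a z = (if obsA z = a then 1 else 0) / ph a (obsX z) * (obsY z - mh (obsA z) (obsX z))
                    + mh a (obsX z)"

definition phi2 :: "(nat \<Rightarrow> 'x \<Rightarrow> real) \<Rightarrow> (nat \<Rightarrow> 'x \<Rightarrow> real) \<Rightarrow> nat \<Rightarrow> real \<times> nat \<times> 'x \<Rightarrow> real" where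
  "phi2 mh ph a z = 2 * mh a (obsX z) * ((if obsA z = a then 1 else 0) / ph a (obsX z))
                      * (obsY z - mh (obsA z) (obsX z)) + (mh a (obsX z))^2"

definition phiC :: "nat \<Rightarrow> (nat \<Rightarrow> real) set \<Rightarrow> (nat \<Rightarrow> 'x \<Rightarrow> real) \<Rightarrow> (nat \<Rightarrow> 'x \<Rightarrow> real)
                     \<Rightarrow> real \<times> nat \<times> 'x \<Rightarrow> real" where
  "phiC p C mh ph z = (let q = proj_cb p C (vec_of p mh (obsX z)) in
      \<Sum>a=1..p. phi2 mh ph a z - 2 * phi1 mh ph a z * q a + (q a)^2)"

definition emp_risk :: "nat \<Rightarrow> (nat \<Rightarrow> real) set \<Rightarrow> (nat \<Rightarrow> 'x \<Rightarrow> real) \<Rightarrow> (nat \<Rightarrow> 'x \<Rightarrow> real)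
                        \<Rightarrow> nat \<Rightarrow> (nat \<Rightarrow> real \<times> nat \<times> 'x) \<Rightarrow> real" where
  "emp_risk p C mh ph n zs = (1 / real n) * (\<Sum>i=1..n. phiC p C mh ph (zs i))"

definition aux_sigma :: "'w measure \<Rightarrow> 'z measure \<Rightarrow> (nat \<Rightarrow> 'w \<Rightarrow> 'z) \<Rightarrow> nat \<Rightarrow> nat \<Rightarrow> 'w measure" where
  "aux_sigma M MZ Z n N = sigma (space M)
     {Z i -` S \<inter> space M | i S. n < i \<and> i \<le> N \<and> S \<in> sets MZ}"

end

theory Submission
  imports Defs
begin

text \<open>
  Replacing Z_r by Z_r' changes the empirical risk by (phi_C(Z_r) - phi_C(Z_r'))/n, so it suffices
  to bound |phi_C| at the two points Z_r, Z_r', uniformly in C, on an event of probability at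
  least 1 - delta.  With q = Pi_C(muhat) and the inverse-probability-weighted residual
  s_a = 1(A = a)/pihat_a(X) (Y - muhat_A(X)), one has
  phi_C = sum_a (muhat_a - q_a)^2 + 2 s_a (muhat_a - q_a).
  The codewords lie in the range of mu, so q is bounded by B like muhat (plus a fixed constant
  when C is empty), and |s_a| <= (T + B)/eps as soon as |Y| <= T and pihat >= eps; Markov's inequality makes
  |Y_r|, |Y_r'| <= T likely.  Overlap is only assumed P_X-almost surely for each fitted pihat; it
  transfers to the random points X_r, X_r' because these are independent of the auxiliary block
  that determines pihat, so the joint law of (omega, Z_r) is a product measure and Fubini applies.
\<close>

section \<open>Bounding the efficient influence function\<close>

lemma proj_cb_empty_const: "proj_cb p {} v = proj_cb p {} w"
  unfolding proj_cb_def arg_min_on_def arg_min_def is_arg_min_def by simp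

text \<open>For the empty codebook (k = 0) the projection is an unspecified but fixed vector,
  whence the second summand.\<close>

lemma abs_proj_cb_le:
  assumes C: "C \<in> codebooks p k mu Xs"
    and mu: "\<And>a x. a \<in> {1..p} \<Longrightarrow> x \<in> Xs \<Longrightarrow> \<bar>mu a x\<bar> \<le> B"
    and a: "a \<in> {1..p}"
  shows "\<bar>proj_cb p C v a\<bar> \<le> \<bar>B\<bar> + (\<Sum>b=1..p. \<bar>proj_cb p {} (\<lambda>_. 0) b\<bar>)"
proof (cases "C = {}")
  case True
  have "\<bar>proj_cb p {} (\<lambda>_. 0) a\<bar> \<le> (\<Sum>b=1..p. \<bar>proj_cb p {} (\<lambda>_. 0) b\<bar>)"
    using a by (intro member_le_sum) auto
  then show ?thesis
    using True proj_cb_empty_const[of p v "\<lambda>_. 0"] by simp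
next
  case False
  have "finite C" and C_sub: "C \<subseteq> vec_of p mu ` Xs"
    using C unfolding codebooks_def by auto
  then have "proj_cb p C v \<in> C"
    unfolding proj_cb_def using arg_min_if_finite(1) False by blast
  then obtain x where "x \<in> Xs" "proj_cb p C v = vec_of p mu x"
    using C_sub by auto
  then have "\<bar>proj_cb p C v a\<bar> \<le> \<bar>B\<bar>"
    using mu[OF a] a by (fastforce simp: vec_of_def)
  moreover have "0 \<le> (\<Sum>b=1..p. \<bar>proj_cb p {} (\<lambda>_. 0) b\<bar>)"
    by (intro sum_nonneg) auto
  ultimately show ?thesis by linarith
qed

definition ipw_residual ::
    "(nat \<Rightarrow> 'x \<Rightarrow> real) \<Rightarrow> (nat \<Rightarrow> 'x \<Rightarrow> real) \<Rightarrow> nat \<Rightarrow> real \<times> nat \<times> 'x \<Rightarrow> real" where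
  "ipw_residual mh ph a z =
     (if obsA z = a then 1 else 0) / ph a (obsX z) * (obsY z - mh (obsA z) (obsX z))"

lemma phiC_eq_sum_ipw_residual:
  "phiC p C mh ph z = (let q = proj_cb p C (vec_of p mh (obsX z)) in
     \<Sum>a=1..p. (mh a (obsX z) - q a)^2 + 2 * ipw_residual mh ph a z * (mh a (obsX z) - q a))"
proof -
  have "phi1 mh ph a z = ipw_residual mh ph a z + mh a (obsX z)"
    and "phi2 mh ph a z = 2 * mh a (obsX z) * ipw_residual mh ph a z + (mh a (obsX z))^2" for a
    by (simp_all add: phi1_def phi2_def ipw_residual_def mult.assoc)
  then show ?thesis
    unfolding phiC_def Let_def by (intro sum.cong refl) (simp add: power2_eq_square algebra_simps)
qed

lemma abs_ipw_residual_le: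
  assumes a: "a \<in> {1..p}"
    and mh: "\<forall>b\<in>{1..p}. \<bar>mh b (obsX z)\<bar> \<le> B"
    and ph: "\<epsilon> \<le> ph a (obsX z)" and \<epsilon>: "\<epsilon> > 0" and Y: "\<bar>obsY z\<bar> \<le> T"
  shows "\<bar>ipw_residual mh ph a z\<bar> \<le> (T + B) / \<epsilon>"
proof (cases "obsA z = a")
  case True
  have "\<bar>obsY z - mh a (obsX z)\<bar> \<le> T + B"
    using mh a Y by fastforce
  then have "\<bar>obsY z - mh a (obsX z)\<bar> / ph a (obsX z) \<le> (T + B) / \<epsilon>"
    using ph \<epsilon> by (intro frac_le) auto
  then show ?thesis
    using True ph \<epsilon> by (simp add: ipw_residual_def abs_mult)
next
  case False
  have "0 \<le> T + B"
    using mh a Y by fastforce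
  then show ?thesis
    using False \<epsilon> by (simp add: ipw_residual_def)
qed

lemma abs_phiC_le:
  assumes mh: "\<forall>a\<in>{1..p}. \<bar>mh a (obsX z)\<bar> \<le> B"
    and res: "\<forall>a\<in>{1..p}. \<bar>ipw_residual mh ph a z\<bar> \<le> R"
    and q: "\<forall>a\<in>{1..p}. \<bar>proj_cb p C (vec_of p mh (obsX z)) a\<bar> \<le> Q"
  shows "\<bar>phiC p C mh ph z\<bar> \<le> real p * ((B + Q)^2 + 2 * R * (B + Q))"
proof -
  define q where "q = proj_cb p C (vec_of p mh (obsX z))"
  have "\<bar>(mh a (obsX z) - q a)^2 + 2 * ipw_residual mh ph a z * (mh a (obsX z) - q a)\<bar>
      \<le> (B + Q)^2 + 2 * R * (B + Q)" if a: "a \<in> {1..p}" for a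
  proof -
    have d: "\<bar>mh a (obsX z) - q a\<bar> \<le> B + Q"
      using mh q a unfolding q_def by fastforce
    have "\<bar>ipw_residual mh ph a z * (mh a (obsX z) - q a)\<bar> \<le> R * (B + Q)"
      unfolding abs_mult using res a d by (intro mult_mono) auto
    moreover have "(mh a (obsX z) - q a)^2 \<le> (B + Q)^2"
      using power_mono[OF d, of 2] by simp
    ultimately show ?thesis
      using zero_le_power2[of "mh a (obsX z) - q a"] unfolding abs_le_iff by linarith
  qed
  then have "\<bar>phiC p C mh ph z\<bar> \<le> (\<Sum>a=1..p. (B + Q)^2 + 2 * R * (B + Q))"
    unfolding phiC_eq_sum_ipw_residual q_def[symmetric] Let_def
    by (intro order_trans[OF sum_abs] sum_mono) auto
  then show ?thesis by simp
qed

lemma emp_risk_replace_one: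
  assumes r: "r \<in> {1..n}"
  shows "emp_risk p C mh ph n zs - emp_risk p C mh ph n (\<lambda>i. if i = r then w else zs i)
       = (phiC p C mh ph (zs r) - phiC p C mh ph w) / real n"
proof -
  let ?f = "\<lambda>i. phiC p C mh ph (zs i)"
  have "(\<Sum>i=1..n. phiC p C mh ph (if i = r then w else zs i))
      = phiC p C mh ph w + (\<Sum>i\<in>{1..n}-{r}. ?f i)"
    using r by (simp add: sum.remove)
  moreover have "(\<Sum>i=1..n. ?f i) = ?f r + (\<Sum>i\<in>{1..n}-{r}. ?f i)"
    using r by (simp add: sum.remove)
  ultimately show ?thesis
    unfolding emp_risk_def by (simp add: diff_divide_distrib[symmetric] algebra_simps)
qed

lemma emp_risk_replace_one_bounded:
  fixes mu :: "nat \<Rightarrow> 'x \<Rightarrow> real"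
  assumes mu: "\<forall>a\<in>{1..p}. \<forall>x\<in>Xs. \<bar>mu a x\<bar> \<le> B" and \<epsilon>: "\<epsilon> > 0"
  obtains K where "\<And>(n::nat) r C (mh :: nat \<Rightarrow> 'x \<Rightarrow> real) ph zs w.
      r \<in> {1..n} \<Longrightarrow> C \<in> codebooks p k mu Xs \<Longrightarrow>
      \<forall>z\<in>{zs r, w}. \<bar>obsY z\<bar> \<le> T \<and> (\<forall>a\<in>{1..p}. \<bar>mh a (obsX z)\<bar> \<le> B \<and> \<epsilon> \<le> ph a (obsX z)) \<Longrightarrow>
      \<bar>emp_risk p C mh ph n zs - emp_risk p C mh ph n (\<lambda>i. if i = r then w else zs i)\<bar>
        \<le> K / real n"
proof
  define Q where "Q = \<bar>B\<bar> + (\<Sum>b=1..p. \<bar>proj_cb p {} (\<lambda>_. 0) b\<bar>)"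
  define L where "L = real p * ((B + Q)^2 + 2 * ((T + B) / \<epsilon>) * (B + Q))"
  fix n :: nat and r C mh ph zs w
  assume r: "r \<in> {1..n}" and C: "C \<in> codebooks p k mu Xs"
    and bdd: "\<forall>z\<in>{zs r, w}. \<bar>obsY z\<bar> \<le> T \<and>
                (\<forall>a\<in>{1..p}. \<bar>mh a (obsX z)\<bar> \<le> B \<and> \<epsilon> \<le> ph a (obsX z))"
  have phiC: "\<bar>phiC p C mh ph z\<bar> \<le> L" if "z \<in> {zs r, w}" for z
    unfolding L_def
  proof (rule abs_phiC_le)
    show "\<forall>a\<in>{1..p}. \<bar>mh a (obsX z)\<bar> \<le> B"
      using bdd that by blast
    show "\<forall>a\<in>{1..p}. \<bar>ipw_residual mh ph a z\<bar> \<le> (T + B) / \<epsilon>"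
      using bdd that \<epsilon> by (intro ballI abs_ipw_residual_le) auto
    show "\<forall>a\<in>{1..p}. \<bar>proj_cb p C (vec_of p mh (obsX z)) a\<bar> \<le> Q"
      unfolding Q_def using C mu by (intro ballI abs_proj_cb_le) auto
  qed
  have "\<bar>phiC p C mh ph (zs r) - phiC p C mh ph w\<bar> \<le> 2 * L"
    using phiC[of "zs r"] phiC[of w] by simp
  then show "\<bar>emp_risk p C mh ph n zs - emp_risk p C mh ph n (\<lambda>i. if i = r then w else zs i)\<bar>
      \<le> 2 * L / real n"
    unfolding emp_risk_replace_one[OF r] by (simp add: divide_right_mono)
qed

section \<open>Events of large probability\<close>

lemma (in prob_space) integrable_tail_prob_le:
  fixes f :: "'a \<Rightarrow> real"
  assumes f: "integrable M f" and \<delta>: "\<delta> > 0"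
  obtains T where "prob {x \<in> space M. T \<le> \<bar>f x\<bar>} \<le> \<delta>"
proof
  define T where "T = (\<integral>x. \<bar>f x\<bar> \<partial>M) / \<delta> + 1"
  have "0 \<le> (\<integral>x. \<bar>f x\<bar> \<partial>M)" by simp
  then have T: "T > 0"
    using \<delta> unfolding T_def by (simp add: add_nonneg_pos)
  have "(\<integral>x. \<bar>f x\<bar> \<partial>M) \<le> \<delta> * T"
    using \<delta> unfolding T_def by (simp add: distrib_left)
  then have "(\<integral>x. \<bar>f x\<bar> \<partial>M) / T \<le> \<delta>"
    using T by (simp add: pos_divide_le_eq mult.commute)
  moreover have "prob {x \<in> space M. T \<le> \<bar>f x\<bar>} \<le> (\<integral>x. \<bar>f x\<bar> \<partial>M) / T"
    using f T by (intro integral_Markov_inequality_measure[where A="space M"]) auto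
  ultimately show "prob {x \<in> space M. T \<le> \<bar>f x\<bar>} \<le> \<delta>" by linarith
qed

lemma (in prob_space) prob_abs_less_both_ge:
  fixes f :: "'b \<Rightarrow> real"
  assumes W: "random_variable N W1" "random_variable N W2" "distr M N W1 = Q" "distr M N W2 = Q"
    and f[measurable]: "f \<in> borel_measurable N"
    and tail: "measure Q {z \<in> space Q. T \<le> \<bar>f z\<bar>} \<le> \<delta> / 2"
  shows "{\<omega> \<in> space M. \<bar>f (W1 \<omega>)\<bar> < T \<and> \<bar>f (W2 \<omega>)\<bar> < T} \<in> events"
    and "1 - \<delta> \<le> prob {\<omega> \<in> space M. \<bar>f (W1 \<omega>)\<bar> < T \<and> \<bar>f (W2 \<omega>)\<bar> < T}"
proof -
  define S where "S W = {\<omega> \<in> space M. T \<le> \<bar>f (W \<omega>)\<bar>}" for W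
  have S: "S W \<in> events" "prob (S W) \<le> \<delta> / 2"
    if "random_variable N W" "distr M N W = Q" for W
  proof -
    have tail_set: "{z \<in> space N. T \<le> \<bar>f z\<bar>} \<in> sets N"
      by measurable
    have "S W = W -` {z \<in> space N. T \<le> \<bar>f z\<bar>} \<inter> space M"
      using measurable_space[OF that(1)] unfolding S_def by blast
    moreover have "space Q = space N"
      using that(2) by (metis space_distr)
    ultimately show "S W \<in> events" "prob (S W) \<le> \<delta> / 2"
      using measurable_sets[OF that(1) tail_set] measure_distr[OF that(1) tail_set] that(2) tail
      by simp_all
  qed
  have eq: "{\<omega> \<in> space M. \<bar>f (W1 \<omega>)\<bar> < T \<and> \<bar>f (W2 \<omega>)\<bar> < T} = space M - (S W1 \<union> S W2)"
    unfolding S_def by auto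
  have S12: "S W1 \<in> events" "S W2 \<in> events" "prob (S W1) \<le> \<delta> / 2" "prob (S W2) \<le> \<delta> / 2"
    using S W by auto
  then show "{\<omega> \<in> space M. \<bar>f (W1 \<omega>)\<bar> < T \<and> \<bar>f (W2 \<omega>)\<bar> < T} \<in> events"
    unfolding eq by auto
  have "prob (S W1 \<union> S W2) \<le> \<delta>"
    using measure_Un_le[OF S12(1,2)] S12(3,4) by linarith
  then show "1 - \<delta> \<le> prob {\<omega> \<in> space M. \<bar>f (W1 \<omega>)\<bar> < T \<and> \<bar>f (W2 \<omega>)\<bar> < T}"
    unfolding eq using S12(1,2) by (simp add: prob_compl)
qed

lemma (in prob_space) AE_event_restrict:
  assumes "AE x in M. P x" and A: "A \<in> events"
  obtains E where "E \<in> events" "E \<subseteq> A" "prob E = prob A" "\<forall>x\<in>E. P x"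
proof -
  obtain N where N: "\<And>x. x \<in> space M - N \<Longrightarrow> P x" "N \<in> null_sets M"
    using AE_E3[OF assms(1)] by blast
  show ?thesis
  proof
    show "A - N \<in> events" "A - N \<subseteq> A" "prob (A - N) = prob A"
      using A N(2) by (auto simp: measure_Diff_null_set)
    show "\<forall>x\<in>A - N. P x"
      using N(1) sets.sets_into_space[OF A] by blast
  qed
qed

section \<open>Evaluating at a variable independent of a sub-sigma-algebra\<close>

lemma (in prob_space) indep_set_sigma_vars_notin:
  assumes ind: "indep_vars (\<lambda>_. MZ) X I" and J: "J \<subseteq> I" and j: "j \<in> I" "j \<notin> J"
  shows "indep_set (sigma_sets (space M) (\<Union>i\<in>J. {X i -` A \<inter> space M | A. A \<in> sets MZ}))
                   (sigma_sets (space M) {X j -` A \<inter> space M | A. A \<in> sets MZ})"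
proof -
  define E where "E i = {X i -` A \<inter> space M | A. A \<in> sets MZ}" for i
  define K where "K = case_bool J {j}"
  have "indep_sets (\<lambda>b. sigma_sets (space M) (\<Union>i\<in>K b. E i)) UNIV"
  proof (rule indep_sets_collect_sigma)
    have "indep_sets E I"
      using ind unfolding indep_vars_def2 E_def by blast
    then show "indep_sets E (\<Union>b\<in>UNIV. K b)"
      by (rule indep_sets_mono_index[rotated])
        (use J j in \<open>auto simp: K_def split: bool.splits\<close>)
    show "Int_stable (E i)" for i
      unfolding E_def Int_stable_def
      by safe (metis (no_types) sets.Int vimage_Int Int_assoc Int_absorb Int_commute Int_left_commute)
    show "disjoint_family_on K UNIV"
      using j unfolding disjoint_family_on_def K_def by (auto split: bool.split)
  qed
  moreover have "(\<lambda>b. sigma_sets (space M) (\<Union>i\<in>K b. E i))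
      = case_bool (sigma_sets (space M) (\<Union>i\<in>J. E i)) (sigma_sets (space M) (E j))"
    by (rule ext) (simp add: K_def split: bool.split)
  ultimately show ?thesis
    unfolding indep_set_def E_def by simp
qed

lemma (in prob_space) pair_restr_to_subalg_eq_distr_Pair:
  assumes F: "subalgebra M F" and X: "random_variable MZ X"
    and ind: "indep_set (sets F) (sigma_sets (space M) {X -` A \<inter> space M | A. A \<in> sets MZ})"
  shows "restr_to_subalg M F \<Otimes>\<^sub>M distr M MZ X = distr M (F \<Otimes>\<^sub>M MZ) (\<lambda>\<omega>. (\<omega>, X \<omega>))"
proof -
  interpret F': prob_space "restr_to_subalg M F"
    using F by (rule prob_space_restr_to_subalg) unfold_locales
  interpret Q: prob_space "distr M MZ X" by (rule prob_space_distr[OF X])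
  interpret FQ: pair_prob_space "restr_to_subalg M F" "distr M MZ X" ..
  show ?thesis
  proof (rule pair_measure_eqI)
    show "sigma_finite_measure (restr_to_subalg M F)" "sigma_finite_measure (distr M MZ X)" ..
    show "sets (restr_to_subalg M F \<Otimes>\<^sub>M distr M MZ X)
        = sets (distr M (F \<Otimes>\<^sub>M MZ) (\<lambda>\<omega>. (\<omega>, X \<omega>)))"
      using F by (simp add: sets_restr_to_subalg cong: sets_pair_measure_cong)
  next
    fix A B assume "A \<in> sets (restr_to_subalg M F)" "B \<in> sets (distr M MZ X)"
    then have A: "A \<in> sets F" and B: "B \<in> sets MZ"
      using F by (simp_all add: sets_restr_to_subalg)
    have "X -` B \<inter> space M \<in> sigma_sets (space M) {X -` A \<inter> space M | A. A \<in> sets MZ}"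
      using B by (intro sigma_sets.Basic) blast
    then have "prob (A \<inter> (X -` B \<inter> space M)) = prob A * prob (X -` B \<inter> space M)"
      by (rule indep_setD[OF ind A])
    moreover have "(\<lambda>\<omega>. (\<omega>, X \<omega>)) -` (A \<times> B) \<inter> space M = A \<inter> (X -` B \<inter> space M)"
      using A F unfolding subalgebra_def by (auto dest: sets.sets_into_space)
    moreover have "(\<lambda>\<omega>. (\<omega>, X \<omega>)) \<in> measurable M (F \<Otimes>\<^sub>M MZ)"
      using measurable_from_subalg[OF F measurable_id] X by (rule measurable_Pair)
    ultimately have "emeasure (distr M (F \<Otimes>\<^sub>M MZ) (\<lambda>\<omega>. (\<omega>, X \<omega>))) (A \<times> B)
        = ennreal (prob A * prob (X -` B \<inter> space M))"
      using A B by (simp add: emeasure_distr emeasure_eq_measure)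
    moreover have "emeasure (restr_to_subalg M F) A = prob A"
      using emeasure_restr_to_subalg[OF F A] by (simp add: emeasure_eq_measure)
    moreover have "emeasure (distr M MZ X) B = prob (X -` B \<inter> space M)"
      using emeasure_distr[OF X B] by (simp add: emeasure_eq_measure)
    ultimately show "emeasure (restr_to_subalg M F) A * emeasure (distr M MZ X) B
        = emeasure (distr M (F \<Otimes>\<^sub>M MZ) (\<lambda>\<omega>. (\<omega>, X \<omega>))) (A \<times> B)"
      by (simp add: ennreal_mult)
  qed
qed

lemma (in sigma_finite_measure) pred_AE_section:
  assumes P[measurable]: "Measurable.pred (N \<Otimes>\<^sub>M M) (\<lambda>y. P (fst y) (snd y))"
  shows "Measurable.pred N (\<lambda>x. AE y in M. P x y)"
proof -
  have "{y \<in> space (N \<Otimes>\<^sub>M M). snd y \<in> {z \<in> space M. \<not> P (fst y) z}}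
      = {y \<in> space (N \<Otimes>\<^sub>M M). \<not> P (fst y) (snd y)}"
    by (auto simp: space_pair_measure)
  also have "\<dots> \<in> sets (N \<Otimes>\<^sub>M M)"
    by measurable
  finally have "(\<lambda>x. emeasure M {z \<in> space M. \<not> P x z}) \<in> borel_measurable N"
    by (rule measurable_emeasure[rotated]) simp
  moreover have "(AE y in M. P x y) \<longleftrightarrow> emeasure M {z \<in> space M. \<not> P x z} = 0"
    if "x \<in> space N" for x
  proof (rule AE_iff_measurable[OF _ refl])
    show "{z \<in> space M. \<not> P x z} \<in> sets M"
      using measurable_Pair2[OF P that] by simp
  qed
  ultimately show ?thesis
    by (subst measurable_cong[where g="\<lambda>x. emeasure M {z \<in> space M. \<not> P x z} = 0"]) simp_all
qed

lemma (in prob_space) AE_at_independent_var: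
  assumes F: "subalgebra M F" and X: "random_variable MZ X"
    and ind: "indep_set (sets F) (sigma_sets (space M) {X -` A \<inter> space M | A. A \<in> sets MZ})"
    and P[measurable]: "Measurable.pred (F \<Otimes>\<^sub>M MZ) (\<lambda>y. P (fst y) (snd y))"
    and AE: "AE \<omega> in M. AE z in distr M MZ X. P \<omega> z"
  shows "AE \<omega> in M. P \<omega> (X \<omega>)"
proof -
  let ?F = "restr_to_subalg M F" and ?Q = "distr M MZ X"
  interpret F': prob_space ?F
    using F by (rule prob_space_restr_to_subalg) unfold_locales
  interpret Q: prob_space ?Q by (rule prob_space_distr[OF X])
  interpret FQ: pair_prob_space ?F ?Q ..
  have sets_FQ: "sets (?F \<Otimes>\<^sub>M ?Q) = sets (F \<Otimes>\<^sub>M MZ)"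
    by (rule sets_pair_measure_cong) (simp_all add: sets_restr_to_subalg[OF F])
  have "Measurable.pred (F \<Otimes>\<^sub>M ?Q) (\<lambda>y. P (fst y) (snd y))"
    by (simp cong: measurable_cong_sets sets_pair_measure_cong)
  then have "Measurable.pred F (\<lambda>\<omega>. AE z in ?Q. P \<omega> z)"
    by (rule Q.pred_AE_section)
  then have "AE \<omega> in ?F. AE z in ?Q. P \<omega> z"
    by (rule AE_restr_to_subalg2[OF F AE])
  moreover have "{y \<in> space (?F \<Otimes>\<^sub>M ?Q). P (fst y) (snd y)} \<in> sets (?F \<Otimes>\<^sub>M ?Q)"
    unfolding sets_FQ sets_eq_imp_space_eq[OF sets_FQ] by measurable
  ultimately have "AE y in ?F \<Otimes>\<^sub>M ?Q. P (fst y) (snd y)"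
    using FQ.AE_pair_measure[where P="\<lambda>y. P (fst y) (snd y)"] by simp
  then have "AE y in distr M (F \<Otimes>\<^sub>M MZ) (\<lambda>\<omega>. (\<omega>, X \<omega>)). P (fst y) (snd y)"
    by (simp only: pair_restr_to_subalg_eq_distr_Pair[OF F X ind])
  moreover have "(\<lambda>\<omega>. (\<omega>, X \<omega>)) \<in> measurable M (F \<Otimes>\<^sub>M MZ)"
    using measurable_from_subalg[OF F measurable_id] X by (rule measurable_Pair)
  ultimately show ?thesis
    by (subst (asm) AE_distr_iff) simp_all
qed

lemma space_aux_sigma: "space (aux_sigma M MZ Z n N) = space M"
  unfolding aux_sigma_def by (rule space_measure_of) auto

lemma sets_aux_sigma:
  "sets (aux_sigma M MZ Z n N)
     = sigma_sets (space M) (\<Union>i\<in>{n<..N}. {Z i -` A \<inter> space M | A. A \<in> sets MZ})"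
proof -
  have "{Z i -` S \<inter> space M | i S. n < i \<and> i \<le> N \<and> S \<in> sets MZ}
      = (\<Union>i\<in>{n<..N}. {Z i -` A \<inter> space M | A. A \<in> sets MZ})"
    by fastforce
  then show ?thesis
    unfolding aux_sigma_def by (subst sets_measure_of) auto
qed

lemma subalgebra_aux_sigma:
  assumes "\<And>i. Z i \<in> measurable M MZ"
  shows "subalgebra M (aux_sigma M MZ Z n N)"
  unfolding subalgebra_def space_aux_sigma sets_aux_sigma
  using assms by (auto intro!: sets.sigma_sets_subset measurable_sets)

lemma (in prob_space) AE_at_var_indep_aux_sigma:
  assumes ind: "indep_vars (\<lambda>_. MZ) (case_sum Z Z') UNIV" and j: "j \<notin> Inl ` {n<..N}"
    and P: "Measurable.pred (aux_sigma M MZ Z n N \<Otimes>\<^sub>M MZ) (\<lambda>y. P (fst y) (snd y))"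
    and AE: "AE \<omega> in M. AE z in distr M MZ (case_sum Z Z' j). P \<omega> z"
  shows "AE \<omega> in M. P \<omega> (case_sum Z Z' j \<omega>)"
proof (rule AE_at_independent_var[OF _ _ _ P AE])
  have rv: "random_variable MZ (case_sum Z Z' i)" for i
    using ind by (simp add: indep_vars_def2)
  have "Z i \<in> measurable M MZ" for i
    using rv[of "Inl i"] by simp
  then show "subalgebra M (aux_sigma M MZ Z n N)"
    by (rule subalgebra_aux_sigma)
  show "random_variable MZ (case_sum Z Z' j)"
    by (rule rv)
  have "indep_set
      (sigma_sets (space M) (\<Union>i\<in>Inl ` {n<..N}. {case_sum Z Z' i -` A \<inter> space M | A. A \<in> sets MZ}))
      (sigma_sets (space M) {case_sum Z Z' j -` A \<inter> space M | A. A \<in> sets MZ})"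
    using j by (intro indep_set_sigma_vars_notin[OF ind]) auto
  then show "indep_set (sets (aux_sigma M MZ Z n N))
      (sigma_sets (space M) {case_sum Z Z' j -` A \<inter> space M | A. A \<in> sets MZ})"
    unfolding sets_aux_sigma by simp
qed

lemma (in prob_space) AE_lower_bound_at_var_indep_aux_sigma:
  fixes c :: real
  assumes ind: "indep_vars (\<lambda>_. MZ) (case_sum Z Z') UNIV" and j: "j \<notin> Inl ` {n<..N}"
    and g: "g \<in> measurable MZ MX" and A: "finite A"
    and h: "\<And>a. (\<lambda>(\<omega>, x). h \<omega> a x) \<in> borel_measurable (aux_sigma M MZ Z n N \<Otimes>\<^sub>M MX)"
    and AE: "AE \<omega> in M. AE x in distr (distr M MZ (case_sum Z Z' j)) MX g. \<forall>a\<in>A. c \<le> h \<omega> a x"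
  shows "AE \<omega> in M. \<forall>a\<in>A. c \<le> h \<omega> a (g (case_sum Z Z' j \<omega>))"
proof (rule AE_at_var_indep_aux_sigma[OF ind j])
  have "(\<lambda>y. (fst y, g (snd y)))
      \<in> measurable (aux_sigma M MZ Z n N \<Otimes>\<^sub>M MZ) (aux_sigma M MZ Z n N \<Otimes>\<^sub>M MX)"
    using g by measurable
  from measurable_compose[OF this h]
  have [measurable]: "(\<lambda>y. h (fst y) a (g (snd y))) \<in> borel_measurable (aux_sigma M MZ Z n N \<Otimes>\<^sub>M MZ)"
    for a
    by simp
  show "Measurable.pred (aux_sigma M MZ Z n N \<Otimes>\<^sub>M MZ) (\<lambda>y. \<forall>a\<in>A. c \<le> h (fst y) a (g (snd y)))"
    using A by measurable
  have "g \<in> measurable (distr M MZ (case_sum Z Z' j)) MX"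
    using g by (simp cong: measurable_cong_sets)
  from AE show "AE \<omega> in M. AE z in distr M MZ (case_sum Z Z' j). \<forall>a\<in>A. c \<le> h \<omega> a (g z)"
    by eventually_elim (rule AE_distrD[OF \<open>g \<in> measurable (distr M MZ (case_sum Z Z' j)) MX\<close>])
qed

lemma (in prob_space) good_event_replace_one:
  fixes T :: real and muhat pihat :: "'a \<Rightarrow> nat \<Rightarrow> 'x \<Rightarrow> real"
  assumes ind: "indep_vars (\<lambda>_. MZ) (case_sum Z Z') UNIV"
    and law: "\<And>j. distr M MZ (case_sum Z Z' j) = Pz"
    and obsX: "obsX \<in> measurable MZ MX" and obsY: "obsY \<in> borel_measurable MZ"
    and r: "r \<le> n"
    and pihat: "\<And>a. (\<lambda>(\<omega>, x). pihat \<omega> a x) \<in> borel_measurable (aux_sigma M MZ Z n N \<Otimes>\<^sub>M MX)"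
    and muhat_bdd: "AE \<omega> in M. \<forall>a\<in>{1..p}. \<forall>x\<in>space MX. \<bar>muhat \<omega> a x\<bar> \<le> B"
    and overlap: "AE \<omega> in M. AE x in distr Pz MX obsX. \<forall>a\<in>{1..p}. \<epsilon> \<le> pihat \<omega> a x"
    and tail: "measure Pz {z \<in> space Pz. T \<le> \<bar>obsY z\<bar>} \<le> \<delta> / 2"
  shows "\<exists>E\<in>events. 1 - \<delta> \<le> prob E \<and> (\<forall>\<omega>\<in>E. \<forall>z\<in>{Z r \<omega>, Z' r \<omega>}. \<bar>obsY z\<bar> \<le> T \<and>
           (\<forall>a\<in>{1..p}. \<bar>muhat \<omega> a (obsX z)\<bar> \<le> B \<and> \<epsilon> \<le> pihat \<omega> a (obsX z)))"
proof -
  have rv: "random_variable MZ (case_sum Z Z' j)" for j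
    using ind by (simp add: indep_vars_def2)
  let ?A = "{\<omega> \<in> space M. \<bar>obsY (Z r \<omega>)\<bar> < T \<and> \<bar>obsY (Z' r \<omega>)\<bar> < T}"
  have A: "?A \<in> events" "1 - \<delta> \<le> prob ?A"
    using prob_abs_less_both_ge[OF rv[of "Inl r"] rv[of "Inr r"] law law obsY tail] by simp_all
  have overlap_at: "AE \<omega> in M. \<forall>a\<in>{1..p}. \<epsilon> \<le> pihat \<omega> a (obsX (case_sum Z Z' j \<omega>))"
    if "j \<notin> Inl ` {n<..N}" for j
    using overlap law[of j]
    by (intro AE_lower_bound_at_var_indep_aux_sigma[where h = pihat, OF ind that obsX _ pihat]) auto
  have fresh: "Inl r \<notin> Inl ` {n<..N}" "Inr r \<notin> Inl ` {n<..N}"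
    using r by auto
  have "AE \<omega> in M. \<forall>z\<in>{Z r \<omega>, Z' r \<omega>}. \<forall>a\<in>{1..p}.
      \<bar>muhat \<omega> a (obsX z)\<bar> \<le> B \<and> \<epsilon> \<le> pihat \<omega> a (obsX z)"
    using AE_space muhat_bdd overlap_at[OF fresh(1)] overlap_at[OF fresh(2)]
  proof eventually_elim
    case (elim \<omega>)
    then have "obsX (Z r \<omega>) \<in> space MX" "obsX (Z' r \<omega>) \<in> space MX"
      using measurable_space[OF obsX] measurable_space[OF rv[of "Inl r"]]
        measurable_space[OF rv[of "Inr r"]] by simp_all
    with elim show ?case by simp
  qed
  then obtain E where "E \<in> events" "E \<subseteq> ?A" "prob E = prob ?A"
    "\<forall>\<omega>\<in>E. \<forall>z\<in>{Z r \<omega>, Z' r \<omega>}. \<forall>a\<in>{1..p}.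
       \<bar>muhat \<omega> a (obsX z)\<bar> \<le> B \<and> \<epsilon> \<le> pihat \<omega> a (obsX z)"
    by (rule AE_event_restrict[OF _ A(1)])
  moreover have "\<forall>\<omega>\<in>E. \<bar>obsY (Z r \<omega>)\<bar> \<le> T \<and> \<bar>obsY (Z' r \<omega>)\<bar> \<le> T"
    using \<open>E \<subseteq> ?A\<close> by fastforce
  ultimately show ?thesis
    using A(2) by (intro bexI[of _ E]) simp_all
qed

theorem lemmaA9:
  fixes M :: "'w measure" and MX :: "'x measure"
    and Z Z' :: "nat \<Rightarrow> 'w \<Rightarrow> real \<times> nat \<times> 'x"
    and Pz :: "(real \<times> nat \<times> 'x) measure"
    and N :: "nat \<Rightarrow> nat" and p k :: nat
    and mu :: "nat \<Rightarrow> 'x \<Rightarrow> real"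
    and muhat pihat :: "nat \<Rightarrow> 'w \<Rightarrow> nat \<Rightarrow> 'x \<Rightarrow> real"
    and B \<epsilon> :: real
  defines "MZ \<equiv> borel \<Otimes>\<^sub>M (count_space UNIV \<Otimes>\<^sub>M MX)"
  assumes M: "prob_space M"
    and p: "p \<ge> 1"
    \<comment> \<open>all Z_i and all copies Z'_r mutually independent with common law Pz\<close>
    and indep: "prob_space.indep_vars M (\<lambda>_. MZ)
                  (\<lambda>j. case j of Inl i \<Rightarrow> Z i | Inr r \<Rightarrow> Z' r) (UNIV :: (nat + nat) set)"
    and lawZ: "\<And>i. distr M MZ (Z i) = Pz"
    and lawZ': "\<And>r. distr M MZ (Z' r) = Pz"
    and Arange: "AE z in Pz. obsA z \<in> {1..p}"
    \<comment> \<open>mu_a(X) = E(Y | X, A = a)\<close>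
    and intY: "integrable Pz obsY"
    and mu_meas: "\<And>a. mu a \<in> borel_measurable MX"
    and mu_reg: "\<And>a S. a \<in> {1..p} \<Longrightarrow> S \<in> sets MX \<Longrightarrow>
         (\<integral>z. obsY z * indicator {z. obsA z = a} z * indicator S (obsX z) \<partial>Pz)
       = (\<integral>z. mu a (obsX z) * indicator {z. obsA z = a} z * indicator S (obsX z) \<partial>Pz)"
    \<comment> \<open>eta-hat_n is fitted on the auxiliary block Z_{n+1},...,Z_{N n} only\<close>
    and muhat_meas: "\<And>n a. (\<lambda>(\<omega>, x). muhat n \<omega> a x)
                        \<in> borel_measurable (aux_sigma M MZ Z n (N n) \<Otimes>\<^sub>M MX)"
    and pihat_meas: "\<And>n a. (\<lambda>(\<omega>, x). pihat n \<omega> a x)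
                        \<in> borel_measurable (aux_sigma M MZ Z n (N n) \<Otimes>\<^sub>M MX)"
    \<comment> \<open>boundedness and overlap\<close>
    and mu_bdd: "\<And>a x. a \<in> {1..p} \<Longrightarrow> x \<in> space MX \<Longrightarrow> \<bar>mu a x\<bar> \<le> B"
    and muhat_bdd: "\<And>n. AE \<omega> in M. \<forall>a\<in>{1..p}. \<forall>x\<in>space MX. \<bar>muhat n \<omega> a x\<bar> \<le> B"
    and eps: "\<epsilon> > 0"
    and pihat_overlap: "\<And>n. AE \<omega> in M. AE x in distr Pz MX obsX.
                           \<forall>a\<in>{1..p}. \<epsilon> \<le> pihat n \<omega> a x \<and> pihat n \<omega> a x \<le> 1 - \<epsilon>"
  shows "\<forall>\<delta>>0. \<exists>K n0. \<forall>n\<ge>n0. \<forall>r\<in>{1..n}. \<exists>E\<in>sets M. measure M E \<ge> 1 - \<delta> \<and>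
           (\<forall>\<omega>\<in>E. \<forall>C\<in>codebooks p k mu (space MX).
              \<bar>emp_risk p C (muhat n \<omega>) (pihat n \<omega>) n (\<lambda>i. Z i \<omega>)
               - emp_risk p C (muhat n \<omega>) (pihat n \<omega>) n (\<lambda>i. if i = r then Z' r \<omega> else Z i \<omega>)\<bar>
              \<le> K / real n)"
proof (intro allI impI)
  fix \<delta> :: real assume "\<delta> > 0"
  interpret prob_space M by (rule M)
  have law: "distr M MZ (case_sum Z Z' j) = Pz" for j
    using lawZ lawZ' by (cases j) simp_all
  have obsX: "obsX \<in> measurable MZ MX" and obsY: "obsY \<in> borel_measurable MZ"
    unfolding MZ_def obsX_def[abs_def] obsY_def[abs_def] by simp_all
  have "random_variable MZ (case_sum Z Z' j)" for j
    using indep by (simp add: indep_vars_def2)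
  then interpret Pz: prob_space Pz
    using prob_space_distr law by metis
  obtain T where T: "Pz.prob {z \<in> space Pz. T \<le> \<bar>obsY z\<bar>} \<le> \<delta> / 2"
    by (rule Pz.integrable_tail_prob_le[OF intY, of "\<delta> / 2"]) (use \<open>\<delta> > 0\<close> in auto)
  have "\<forall>a\<in>{1..p}. \<forall>x\<in>space MX. \<bar>mu a x\<bar> \<le> B"
    using mu_bdd by blast
  then obtain K where K: "\<And>(n::nat) r C (mh :: nat \<Rightarrow> 'x \<Rightarrow> real) ph zs w.
      r \<in> {1..n} \<Longrightarrow> C \<in> codebooks p k mu (space MX) \<Longrightarrow>
      \<forall>z\<in>{zs r, w}. \<bar>obsY z\<bar> \<le> T \<and> (\<forall>a\<in>{1..p}. \<bar>mh a (obsX z)\<bar> \<le> B \<and> \<epsilon> \<le> ph a (obsX z)) \<Longrightarrow>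
      \<bar>emp_risk p C mh ph n zs - emp_risk p C mh ph n (\<lambda>i. if i = r then w else zs i)\<bar> \<le> K / real n"
    by (rule emp_risk_replace_one_bounded[OF _ eps]) (rule that)
  have overlap: "AE \<omega> in M. AE x in distr Pz MX obsX. \<forall>a\<in>{1..p}. \<epsilon> \<le> pihat n \<omega> a x" for n
    using pihat_overlap[of n] by eventually_elim (auto elim: eventually_mono)
  show "\<exists>K n0. \<forall>n\<ge>n0. \<forall>r\<in>{1..n}. \<exists>E\<in>sets M. measure M E \<ge> 1 - \<delta> \<and>
           (\<forall>\<omega>\<in>E. \<forall>C\<in>codebooks p k mu (space MX).
              \<bar>emp_risk p C (muhat n \<omega>) (pihat n \<omega>) n (\<lambda>i. Z i \<omega>)
               - emp_risk p C (muhat n \<omega>) (pihat n \<omega>) n (\<lambda>i. if i = r then Z' r \<omega> else Z i \<omega>)\<bar>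
              \<le> K / real n)"
  proof (intro exI[of _ K] exI[of _ "0::nat"] allI impI ballI)
    fix n r :: nat assume r: "r \<in> {1..n}"
    then have "r \<le> n" by simp
    from good_event_replace_one[OF indep law obsX obsY this pihat_meas muhat_bdd overlap T]
    obtain E where "E \<in> sets M" "1 - \<delta> \<le> measure M E" "\<forall>\<omega>\<in>E. \<forall>z\<in>{Z r \<omega>, Z' r \<omega>}.
      \<bar>obsY z\<bar> \<le> T \<and> (\<forall>a\<in>{1..p}. \<bar>muhat n \<omega> a (obsX z)\<bar> \<le> B \<and> \<epsilon> \<le> pihat n \<omega> a (obsX z))"
      by blast
    then show "\<exists>E\<in>sets M. 1 - \<delta> \<le> measure M E \<and>
      (\<forall>\<omega>\<in>E. \<forall>C\<in>codebooks p k mu (space MX).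
        \<bar>emp_risk p C (muhat n \<omega>) (pihat n \<omega>) n (\<lambda>i. Z i \<omega>)
         - emp_risk p C (muhat n \<omega>) (pihat n \<omega>) n (\<lambda>i. if i = r then Z' r \<omega> else Z i \<omega>)\<bar> \<le> K / real n)"
      by (intro bexI[of _ E] conjI ballI K[OF r]) auto
  qed
qed

end
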